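(* Let $0<\beta<1$, $T>0$, $n_T$ a positive integer, $\tau=T/n_T$ and $t_k=k\tau$. Let $\varrho_j$ be defined by $(1-z)^{-\beta}=\sum_{j=0}^\infty \varrho_j z^j$ and set $P_{j}:=\tau^{\beta}\varrho_{j}$. Then for any real $\mu>0$, $$\mu\sum_{j=0}^{k-1}P_{k-j}\,E_\beta(\mu t_j^{\beta})\le E_\beta(\mu t_k^{\beta})-1,\qquad 1\le k\le n_T,$$ where $E_\beta(z)=\sum_{l=0}^\infty \frac{z^l}{\Gamma(1+l\beta)}$ is the Mittag-Leffler function. *)

theory Defs
  imports "HOL-Analysis.Analysis"
begin

definition ml_rho :: "real \<Rightarrow> nat \<Rightarrow> real" where
  "ml_rho \<beta> = (THE c. \<forall>z::real. \<bar>z\<bar> < 1 \<longrightarrow>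
       (\<lambda>j. c j * z ^ j) sums ((1 - z) powr (- \<beta>)))"

definition mittag_leffler :: "real \<Rightarrow> real \<Rightarrow> real" where
  "mittag_leffler \<beta> z = (\<Sum>l. z ^ l / Gamma (1 + real l * \<beta>))"

end

(* The binomial series identifies rho_j = (beta)_j / j! = Gamma(j + beta) / (Gamma beta * j!), and
   log-convexity of Gamma (Gamma(x + s) <= x^s Gamma x) gives rho_m <= m^(beta - 1) / Gamma beta.
   Writing m = mu tau^beta and expanding both Mittag-Leffler functions as power series in m, the
   inequality reduces coefficientwise to
     sum_{j<k} rho_(k-j) j^(l beta) <= k^((l+1) beta) Gamma(1 + l beta) / Gamma(1 + (l+1) beta).
   For j < s < j + 1 the summand is at most (k - s)^(beta - 1) s^(l beta) / Gamma beta, so the sum is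
   bounded by the fractional integral of s^(l beta) over [0, k], a Beta integral equal to the right side. *)
theory Submission
  imports Defs
begin

lemma powser_sums_shift:
  fixes a :: "nat \<Rightarrow> 'a::real_normed_field"
  assumes "(\<lambda>n. a n * z ^ n) sums s" "z \<noteq> 0"
  shows "(\<lambda>n. a (Suc n) * z ^ n) sums ((s - a 0) / z)"
proof -
  have "(\<lambda>n. a (Suc n) * z ^ Suc n) sums (s - a 0)"
    using assms(1) by (subst sums_Suc_iff) simp
  then have "(\<lambda>n. a (Suc n) * z ^ Suc n / z) sums ((s - a 0) / z)"
    by (rule sums_divide)
  then show ?thesis
    using assms(2) by simp
qed

lemma powser_coeffs_unique:
  fixes a b :: "nat \<Rightarrow> 'a::{real_normed_field,banach}"
  assumes "0 < r"
    and "\<And>z. z \<noteq> 0 \<Longrightarrow> norm z < r \<Longrightarrow> (\<lambda>n. a n * z ^ n) sums f z"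
    and "\<And>z. z \<noteq> 0 \<Longrightarrow> norm z < r \<Longrightarrow> (\<lambda>n. b n * z ^ n) sums f z"
  shows "a = b"
proof
  fix m
  from assms(2,3) show "a m = b m"
  proof (induction m arbitrary: a b f)
    case 0
    have "(f \<longlongrightarrow> a 0) (at 0)" "(f \<longlongrightarrow> b 0) (at 0)"
      using powser_limit_0_strong[OF \<open>0 < r\<close>] 0 by blast+
    then show ?case
      using tendsto_unique trivial_limit_at by blast
  next
    case (Suc m)
    have "(f \<longlongrightarrow> a 0) (at 0)" "(f \<longlongrightarrow> b 0) (at 0)"
      using powser_limit_0_strong[OF \<open>0 < r\<close>] Suc.prems by blast+
    then have "a 0 = b 0"
      using tendsto_unique trivial_limit_at by blast
    then have "(\<lambda>n. a (Suc n)) m = (\<lambda>n. b (Suc n)) m"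
      using Suc.IH[of "\<lambda>n. a (Suc n)" "\<lambda>z. (f z - a 0) / z" "\<lambda>n. b (Suc n)"]
        powser_sums_shift[OF Suc.prems(1)] powser_sums_shift[OF Suc.prems(2)] by metis
    then show ?case by simp
  qed
qed

lemma ml_rho_sums:
  fixes z \<beta> :: real
  assumes "\<bar>z\<bar> < 1"
  shows "(\<lambda>j. pochhammer \<beta> j / fact j * z ^ j) sums ((1 - z) powr (- \<beta>))"
proof -
  have "(\<lambda>j. ((- \<beta>) gchoose j) * (- z) ^ j) sums (1 - z) powr (- \<beta>)"
    using gen_binomial_real[of "- z" "- \<beta>"] assms by simp
  moreover have "((- \<beta>) gchoose j) * (- z) ^ j = pochhammer \<beta> j / fact j * z ^ j" for j
    by (simp add: gbinomial_pochhammer power_minus[of z] flip: power_add mult_2)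
  ultimately show ?thesis by simp
qed

lemma ml_rho_eq: "ml_rho \<beta> = (\<lambda>j. pochhammer \<beta> j / fact j)"
  unfolding ml_rho_def
proof (rule the_equality)
  fix c
  assume "\<forall>z::real. \<bar>z\<bar> < 1 \<longrightarrow> (\<lambda>j. c j * z ^ j) sums (1 - z) powr (- \<beta>)"
  then show "c = (\<lambda>j. pochhammer \<beta> j / fact j)"
    using powser_coeffs_unique[of 1 c "\<lambda>z. (1 - z) powr (- \<beta>)"] ml_rho_sums by force
qed (use ml_rho_sums in blast)

lemma Gamma_add_le_powr:
  fixes x s :: real
  assumes "0 < x" "0 \<le> s" "s \<le> 1"
  shows "Gamma (x + s) \<le> x powr s * Gamma x"
proof -
  have Gamma_pos: "0 < Gamma x"
    using assms by simp
  have "ln (Gamma ((1 - s) * x + s * (x + 1))) \<le> (1 - s) * ln (Gamma x) + s * ln (Gamma (x + 1))"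
    using convex_onD[OF log_convex_Gamma_real, of s x "x + 1"] assms by simp
  also have "Gamma (x + 1) = x * Gamma x"
    by (rule Gamma_plus1) (use assms in \<open>auto elim!: nonpos_Ints_cases\<close>)
  also have "(1 - s) * ln (Gamma x) + s * ln (x * Gamma x) = ln (x powr s * Gamma x)"
    using assms Gamma_pos by (simp add: ln_mult ln_powr algebra_simps)
  finally have "ln (Gamma (x + s)) \<le> ln (x powr s * Gamma x)"
    by (simp add: algebra_simps)
  then show ?thesis
    using assms Gamma_pos by simp
qed

lemma Gamma_div_Gamma_add_le:
  fixes y s :: real
  assumes "0 < y" "0 \<le> s" "s \<le> 1"
  shows "Gamma y / Gamma (y + s) \<le> (y + s) powr (1 - s) / y"
proof -
  have "y * Gamma y = Gamma (y + 1)"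
    by (rule Gamma_plus1[symmetric]) (use assms in \<open>auto elim!: nonpos_Ints_cases\<close>)
  also have "\<dots> = Gamma (y + s + (1 - s))"
    by simp
  also have "\<dots> \<le> (y + s) powr (1 - s) * Gamma (y + s)"
    using assms by (intro Gamma_add_le_powr) auto
  finally show ?thesis
    using assms by (simp add: field_simps)
qed

lemma ml_rho_le:
  fixes \<beta> :: real
  assumes "0 < \<beta>" "\<beta> \<le> 1" "0 < m"
  shows "ml_rho \<beta> m \<le> real m powr (\<beta> - 1) / Gamma \<beta>"
proof -
  obtain n where n: "m = Suc n"
    using assms(3) gr0_implies_Suc by blast
  have "\<beta> \<notin> \<int>\<^sub>\<le>\<^sub>0"
    using assms by (auto elim!: nonpos_Ints_cases)
  then have "ml_rho \<beta> m = Gamma (real m + \<beta>) / (Gamma \<beta> * (real m * Gamma (real m)))"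
    using Gamma_fact[of n, where 'a = real] by (simp add: ml_rho_eq pochhammer_Gamma add.commute n)
  also have "\<dots> \<le> real m powr \<beta> * Gamma (real m) / (Gamma \<beta> * (real m * Gamma (real m)))"
    using assms by (intro divide_right_mono Gamma_add_le_powr) (auto intro: less_imp_le)
  also have "\<dots> = real m powr (\<beta> - 1) / Gamma \<beta>"
    using assms by (simp add: powr_diff field_simps less_imp_neq[OF Gamma_real_pos, symmetric])
  finally show ?thesis .
qed

lemma ml_rho_le_kernel:
  fixes \<beta> s :: real and k n :: nat
  assumes "0 < \<beta>" "\<beta> \<le> 1" "n < k" "real n < s" "s < real (Suc n)"
  shows "ml_rho \<beta> (k - n) \<le> (real k - s) powr (\<beta> - 1) / Gamma \<beta>"
proof -
  have "0 < real k - s" "real k - s \<le> real (k - n)"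
    using assms(3-5) by (simp_all add: of_nat_diff)
  have "ml_rho \<beta> (k - n) \<le> real (k - n) powr (\<beta> - 1) / Gamma \<beta>"
    using assms by (intro ml_rho_le) auto
  also have "\<dots> \<le> (real k - s) powr (\<beta> - 1) / Gamma \<beta>"
    using assms \<open>0 < real k - s\<close> \<open>real k - s \<le> real (k - n)\<close>
    by (intro divide_right_mono powr_mono2') auto
  finally show ?thesis .
qed

lemma summable_mittag_leffler:
  fixes \<beta> z :: real
  assumes "0 < \<beta>" "\<beta> \<le> 1"
  shows "summable (\<lambda>l. z ^ l / Gamma (1 + real l * \<beta>))"
proof -
  have "(\<lambda>l. \<bar>z\<bar> * ((1 + real l * \<beta> + \<beta>) powr (1 - \<beta>) / (1 + real l * \<beta>))) \<longlonglongrightarrow> 0"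
    (is "?r \<longlonglongrightarrow> 0")
    using assms by real_asymp
  then have "\<forall>\<^sub>F l in sequentially. ?r l < 1 / 2"
    by (rule order_tendstoD) simp
  then obtain N where N: "\<And>l. N \<le> l \<Longrightarrow> ?r l < 1 / 2"
    by (auto simp: eventually_sequentially)
  show ?thesis
  proof (rule summable_ratio_test[of "1 / 2" N])
    fix l
    assume "N \<le> l"
    define y where "y = 1 + real l * \<beta>"
    have "0 < y" "0 < Gamma y"
      using assms by (simp_all add: y_def add_pos_nonneg)
    have "\<bar>z\<bar> * (Gamma y / Gamma (y + \<beta>)) \<le> \<bar>z\<bar> * ((y + \<beta>) powr (1 - \<beta>) / y)"
      using \<open>0 < y\<close> assms by (intro mult_left_mono Gamma_div_Gamma_add_le) auto
    also have "\<dots> \<le> 1 / 2"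
      using N[OF \<open>N \<le> l\<close>] by (simp add: y_def)
    finally have "\<bar>z\<bar> * (Gamma y / Gamma (y + \<beta>)) * (\<bar>z\<bar> ^ l / Gamma y) \<le> 1 / 2 * (\<bar>z\<bar> ^ l / Gamma y)"
      using \<open>0 < Gamma y\<close> by (intro mult_right_mono) auto
    then have "\<bar>z\<bar> ^ Suc l / Gamma (y + \<beta>) \<le> 1 / 2 * (\<bar>z\<bar> ^ l / Gamma y)"
      using \<open>0 < Gamma y\<close> by simp
    moreover have "1 + real (Suc l) * \<beta> = y + \<beta>"
      by (simp add: y_def algebra_simps)
    moreover have "0 < Gamma (y + \<beta>)"
      using \<open>0 < y\<close> assms by simp
    ultimately show "norm (z ^ Suc l / Gamma (1 + real (Suc l) * \<beta>))
        \<le> 1 / 2 * norm (z ^ l / Gamma (1 + real l * \<beta>))"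
      using \<open>0 < Gamma y\<close> unfolding y_def[symmetric] by (simp add: abs_mult power_abs)
  qed simp
qed

lemma mittag_leffler_sums:
  fixes \<beta> z :: real
  assumes "0 < \<beta>" "\<beta> \<le> 1"
  shows "(\<lambda>l. z ^ l / Gamma (1 + real l * \<beta>)) sums mittag_leffler \<beta> z"
  unfolding mittag_leffler_def using summable_mittag_leffler[OF assms] by (rule summable_sums)

lemma mittag_leffler_minus_one_sums:
  fixes \<beta> z :: real
  assumes "0 < \<beta>" "\<beta> \<le> 1"
  shows "(\<lambda>l. z ^ Suc l / Gamma (1 + real (Suc l) * \<beta>)) sums (mittag_leffler \<beta> z - 1)"
  using mittag_leffler_sums[OF assms, of z] by (subst sums_Suc_iff) simp

lemma sum_mittag_leffler_sums:
  fixes \<beta> :: real and w x :: "'a \<Rightarrow> real"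
  assumes "0 < \<beta>" "\<beta> \<le> 1"
  shows "(\<lambda>l. \<Sum>j\<in>A. w j * x j ^ l / Gamma (1 + real l * \<beta>))
           sums (\<Sum>j\<in>A. w j * mittag_leffler \<beta> (x j))"
  using sums_sum[OF sums_mult[OF mittag_leffler_sums[OF assms]]] by (simp add: mult.assoc)

lemma integral_ge_const_on_open_interval:
  fixes F :: "real \<Rightarrow> real"
  assumes "F integrable_on {a..b}" "a \<le> b" "\<And>s. a < s \<Longrightarrow> s < b \<Longrightarrow> v \<le> F s"
  shows "(b - a) * v \<le> integral {a..b} F"
proof -
  have open_iff: "(f has_integral y) {a<..<b} \<longleftrightarrow> (f has_integral y) {a..b}" for f and y :: real
    using has_integral_open_interval[of f y a b] by simp
  have "((\<lambda>_. v) has_integral (b - a) * v) {a<..<b}"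
    using has_integral_const_real[of v a b] assms(2) by (simp add: open_iff)
  moreover have "(F has_integral integral {a..b} F) {a<..<b}"
    using assms(1) by (simp add: open_iff has_integral_integral)
  ultimately show ?thesis
    using assms(3) by (rule has_integral_le) auto
qed

lemma sum_le_integral_unit_steps:
  fixes F :: "real \<Rightarrow> real" and v :: "nat \<Rightarrow> real"
  assumes "F integrable_on {0..real k}"
    and "\<And>n s. n < k \<Longrightarrow> real n < s \<Longrightarrow> s < real (Suc n) \<Longrightarrow> v n \<le> F s"
  shows "(\<Sum>n<k. v n) \<le> integral {0..real k} F"
  using assms
proof (induction k)
  case (Suc k)
  have "(\<Sum>n<k. v n) \<le> integral {0..real k} F"
    using Suc.prems by (intro Suc.IH) (auto intro: integrable_on_subinterval)
  moreover have "(real (Suc k) - real k) * v k \<le> integral {real k..real (Suc k)} F"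
    by (rule integral_ge_const_on_open_interval) (use Suc.prems in \<open>auto intro: integrable_on_subinterval\<close>)
  ultimately have "(\<Sum>n<Suc k. v n) \<le> integral {0..real k} F + integral {real k..real (Suc k)} F"
    by simp
  also have "\<dots> = integral {0..real (Suc k)} F"
    using Suc.prems(1) by (intro Henstock_Kurzweil_Integration.integral_combine) auto
  finally show ?case .
qed simp

lemma has_integral_Beta_real_interval:
  fixes a b x :: real
  assumes "0 < a" "0 < b" "0 < x"
  shows "((\<lambda>s. s powr (a - 1) * (x - s) powr (b - 1)) has_integral x powr (a + b - 1) * Beta a b) {0..x}"
proof -
  have "((\<lambda>s. (s / x) powr (a - 1) * (1 - s / x) powr (b - 1)) has_integral x * Beta a b) {0..x}"
    using has_integral_stretch_real[OF has_integral_Beta_real[OF assms(1,2)], of "1 / x"] assms(3)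
    by (simp add: image_mult_atLeastAtMost_if')
  then have "((\<lambda>s. x powr (a + b - 2) * ((s / x) powr (a - 1) * (1 - s / x) powr (b - 1)))
      has_integral x powr (a + b - 2) * (x * Beta a b)) {0..x}"
    by (rule has_integral_mult_right)
  moreover have "x powr (a + b - 2) * (x * Beta a b) = x powr (a + b - 1) * Beta a b"
    using assms(3) powr_add[of x "a + b - 2" 1] by simp
  moreover have "x powr (a + b - 2) * ((s / x) powr (a - 1) * (1 - s / x) powr (b - 1))
      = s powr (a - 1) * (x - s) powr (b - 1)" for s
  proof -
    have "1 - s / x = (x - s) / x"
      using assms(3) by (simp add: field_simps)
    moreover have "x powr (a + b - 2) = x powr (a - 1) * x powr (b - 1)"
      by (simp flip: powr_add)
    ultimately show ?thesis
      using assms(3) by (simp add: powr_divide field_simps)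
  qed
  ultimately show ?thesis
    by simp
qed

(* The power is written (j powr beta) ^ l, not j powr (l * beta): the two differ at j = l = 0,
   where 0 powr 0 = 0. *)
lemma ml_rho_convolution_power_le:
  fixes \<beta> :: real and k l :: nat
  assumes "0 < \<beta>" "\<beta> \<le> 1" "0 < k"
  shows "(\<Sum>j<k. ml_rho \<beta> (k - j) * (real j powr \<beta>) ^ l)
    \<le> real k powr (real (Suc l) * \<beta>) * Gamma (1 + real l * \<beta>) / Gamma (1 + real (Suc l) * \<beta>)"
proof -
  define a where "a = 1 + real l * \<beta>"
  define F where "F s = s powr (a - 1) * (real k - s) powr (\<beta> - 1) / Gamma \<beta>" for s
  have "0 < a" "0 < Gamma \<beta>"
    using assms by (simp_all add: a_def add_pos_nonneg)
  have F_integral: "(F has_integral real k powr (a + \<beta> - 1) * Beta a \<beta> / Gamma \<beta>) {0..real k}"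
    unfolding F_def using assms \<open>0 < a\<close>
    by (intro has_integral_divide has_integral_Beta_real_interval) auto
  have "(\<Sum>j<k. ml_rho \<beta> (k - j) * (real j powr \<beta>) ^ l) \<le> integral {0..real k} F"
  proof (rule sum_le_integral_unit_steps)
    show "F integrable_on {0..real k}"
      using F_integral by blast
    fix n s
    assume "n < k" "real n < s" "s < real (Suc n)"
    then have rho_le: "ml_rho \<beta> (k - n) \<le> (real k - s) powr (\<beta> - 1) / Gamma \<beta>"
      using assms by (intro ml_rho_le_kernel) auto
    have "(real n powr \<beta>) ^ l \<le> (s powr \<beta>) ^ l"
      using assms \<open>real n < s\<close> by (intro power_mono powr_mono2) auto
    also have "\<dots> = s powr (a - 1)"
      using \<open>real n < s\<close> by (simp add: a_def powr_power)
    finally have "(real n powr \<beta>) ^ l \<le> s powr (a - 1)" .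
    with rho_le have "ml_rho \<beta> (k - n) * (real n powr \<beta>) ^ l
        \<le> (real k - s) powr (\<beta> - 1) / Gamma \<beta> * s powr (a - 1)"
      by (rule mult_mono) (use assms in auto)
    then show "ml_rho \<beta> (k - n) * (real n powr \<beta>) ^ l \<le> F s"
      by (simp add: F_def mult_ac)
  qed
  also have "integral {0..real k} F = real k powr (a + \<beta> - 1) * Beta a \<beta> / Gamma \<beta>"
    using F_integral by blast
  also have "\<dots> = real k powr (real (Suc l) * \<beta>) * Gamma (1 + real l * \<beta>) / Gamma (1 + real (Suc l) * \<beta>)"
    using \<open>0 < Gamma \<beta>\<close> by (simp add: a_def Beta_def algebra_simps)
  finally show ?thesis .
qed

lemma ml_rho_convolution_mittag_leffler_le:
  fixes \<beta> m :: real and k :: nat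
  assumes "0 < \<beta>" "\<beta> \<le> 1" "0 \<le> m" "0 < k"
  shows "(\<Sum>j<k. m * ml_rho \<beta> (k - j) * mittag_leffler \<beta> (m * real j powr \<beta>))
    \<le> mittag_leffler \<beta> (m * real k powr \<beta>) - 1"
proof -
  have termwise: "(\<Sum>j<k. m * ml_rho \<beta> (k - j) * (m * real j powr \<beta>) ^ l / Gamma (1 + real l * \<beta>))
      \<le> (m * real k powr \<beta>) ^ Suc l / Gamma (1 + real (Suc l) * \<beta>)" for l
  proof -
    have "0 < Gamma (1 + real l * \<beta>)"
      using assms by (simp add: add_pos_nonneg)
    have "(\<Sum>j<k. m * ml_rho \<beta> (k - j) * (m * real j powr \<beta>) ^ l / Gamma (1 + real l * \<beta>))
        = m ^ Suc l / Gamma (1 + real l * \<beta>) * (\<Sum>j<k. ml_rho \<beta> (k - j) * (real j powr \<beta>) ^ l)"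
      by (simp add: sum_distrib_left power_mult_distrib mult_ac)
    also have "\<dots> \<le> m ^ Suc l / Gamma (1 + real l * \<beta>)
        * (real k powr (real (Suc l) * \<beta>) * Gamma (1 + real l * \<beta>) / Gamma (1 + real (Suc l) * \<beta>))"
      using assms \<open>0 < Gamma (1 + real l * \<beta>)\<close>
      by (intro mult_left_mono ml_rho_convolution_power_le) auto
    also have "real k powr (real (Suc l) * \<beta>) = (real k powr \<beta>) ^ Suc l"
      using assms(4) by (subst powr_power) auto
    also have "m ^ Suc l / Gamma (1 + real l * \<beta>)
        * ((real k powr \<beta>) ^ Suc l * Gamma (1 + real l * \<beta>) / Gamma (1 + real (Suc l) * \<beta>))
        = (m * real k powr \<beta>) ^ Suc l / Gamma (1 + real (Suc l) * \<beta>)"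
      using \<open>0 < Gamma (1 + real l * \<beta>)\<close> by (simp add: power_mult_distrib)
    finally show ?thesis .
  qed
  show ?thesis
    using termwise sum_mittag_leffler_sums[OF assms(1,2)] mittag_leffler_minus_one_sums[OF assms(1,2)]
    by (rule sums_le)
qed

theorem lemma2p3:
  fixes \<beta> T \<mu> :: real and nT k :: nat
  assumes "0 < \<beta>" "\<beta> < 1" "T > 0" "nT > 0" "\<mu> > 0" "1 \<le> k" "k \<le> nT"
  defines "\<tau> \<equiv> T / real nT"
  shows "\<mu> * (\<Sum>j<k. (\<tau> powr \<beta> * ml_rho \<beta> (k - j))
              * mittag_leffler \<beta> (\<mu> * (real j * \<tau>) powr \<beta>))
         \<le> mittag_leffler \<beta> (\<mu> * (real k * \<tau>) powr \<beta>) - 1"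
proof -
  have "0 < \<tau>"
    using assms by (simp add: \<tau>_def)
  define m where "m = \<mu> * \<tau> powr \<beta>"
  have arg_eq: "\<mu> * (real j * \<tau>) powr \<beta> = m * real j powr \<beta>" for j
    using \<open>0 < \<tau>\<close> by (simp add: m_def powr_mult)
  have "\<mu> * (\<Sum>j<k. (\<tau> powr \<beta> * ml_rho \<beta> (k - j)) * mittag_leffler \<beta> (\<mu> * (real j * \<tau>) powr \<beta>))
      = (\<Sum>j<k. m * ml_rho \<beta> (k - j) * mittag_leffler \<beta> (m * real j powr \<beta>))"
    unfolding arg_eq by (simp add: sum_distrib_left m_def mult_ac)
  also have "\<dots> \<le> mittag_leffler \<beta> (m * real k powr \<beta>) - 1"
    using assms \<open>0 < \<tau>\<close> by (intro ml_rho_convolution_mittag_leffler_le) (auto simp: m_def)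
  finally show ?thesis
    by (simp only: arg_eq)
qed

end
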